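(* Let $\alpha\in(0,1)$, $f>0$, $\varpi>0$, $R>0$. There exist a threshold $p^*\in(0,1)$ and a smooth function $\hat I:[p^*,1)\to(0,+\infty)$ such that: (1) for every $p\in(0,p^* )$, $U_0(p)\ge\sup_{I\ge0}U(p,I)$ (not insuring is optimal); (2) for $p=p^*$, $U_0(p^* )=\max_{I\ge0}U(p^*,I)=U(p^*,\hat I(p^* ))$ with $\hat I(p^* )>0$ (indifference between not insuring and insuring at indemnity $\hat I(p^* )$); (3) for every $p\in(p^*,1)$, $\max_{I\ge0}U(p,I)=U(p,\hat I(p))>U_0(p)$ with $\hat I(p)>0$ (insuring at indemnity $\hat I(p)$ is optimal).
   Context: Insurance model: a good of value $\varpi$ may be totally lost. The premium for indemnity $I$ is $P(I)=\alpha I+f$. The utility is $u(w)=1-e^{-Rw}$. For a probability of loss $p\in(0,1)$, the expected utility of not insuring is $U_0(p)=(1-p)u(\varpi)+p\,u(0)=(1-p)(1-e^{-R\varpi})$, and the expected utility of insuring with indemnity $I$ is $U(p,I)=(1-p)u(\varpi-P(I))+p\,u(I-P(I))=1-p e^{-R(I-P(I))}-(1-p)e^{-R(\varpi-P(I))}$. *)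

theory Defs
  imports "HOL-Analysis.Analysis"
begin

definition util :: "real \<Rightarrow> real \<Rightarrow> real" where
  "util R w = 1 - exp (- R * w)"

definition premium :: "real \<Rightarrow> real \<Rightarrow> real \<Rightarrow> real" where
  "premium \<alpha> f I = \<alpha> * I + f"

definition U0 :: "real \<Rightarrow> real \<Rightarrow> real \<Rightarrow> real" where
  "U0 R W p = (1 - p) * util R W + p * util R 0"

definition U :: "real \<Rightarrow> real \<Rightarrow> real \<Rightarrow> real \<Rightarrow> real \<Rightarrow> real \<Rightarrow> real" where
  "U \<alpha> f R W p I =
     (1 - p) * util R (W - premium \<alpha> f I) + p * util R (I - premium \<alpha> f I)"

definition smooth_on :: "real set \<Rightarrow> (real \<Rightarrow> real) \<Rightarrow> bool" where
  "smooth_on S g \<longleftrightarrow> (\<exists>D :: nat \<Rightarrow> real \<Rightarrow> real.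
      (\<forall>x\<in>S. D 0 x = g x) \<and>
      (\<forall>n. \<forall>x\<in>S. (D n has_real_derivative D (Suc n) x) (at x within S)))"

end

theory Submission
  imports Defs
begin

text \<open>Up to the factor \<open>e\<^sup>R\<^sup>f\<close>, the expected disutility of insuring with indemnity \<open>I\<close> is
  \<open>G(p,I) = p e\<^sup>-\<^sup>R\<^sup>(\<^sup>1\<^sup>-\<^sup>\<alpha>\<^sup>)\<^sup>I + (1-p) e\<^sup>-\<^sup>R\<^sup>\<varpi> e\<^sup>R\<^sup>\<alpha>\<^sup>I\<close>, a convex function of \<open>I\<close>, so the optimal
  indemnity is its stationary point \<open>\<hat>I(p)\<close>, an increasing bijection from \<open>(0,1)\<close> onto the
  reals. At \<open>J = \<hat>I(p)\<close> the gain of insuring over not insuring is a positive multiple of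
  \<open>h(J) - e\<^sup>R\<^sup>f\<close> with \<open>h(J) = \<alpha> e\<^sup>R\<^sup>(\<^sup>1\<^sup>-\<^sup>\<alpha>\<^sup>)\<^sup>J + (1-\<alpha>) e\<^sup>-\<^sup>R\<^sup>\<alpha>\<^sup>J\<close>, and \<open>h\<close> increases from
  \<open>h(0) = 1 < e\<^sup>R\<^sup>f\<close> to infinity on \<open>[0,\<infinity>)\<close>. Hence \<open>h\<close> crosses \<open>e\<^sup>R\<^sup>f\<close> at a unique
  \<open>J\<^sup>* > 0\<close>, and \<open>p\<^sup>*\<close> is defined by \<open>\<hat>I(p\<^sup>*) = J\<^sup>*\<close>. For \<open>p < p\<^sup>*\<close> with \<open>\<hat>I(p) \<le> 0\<close> the
  best admissible indemnity is \<open>I = 0\<close>, which only adds the fee to not insuring.\<close>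

text \<open>\<open>logit_deriv m\<close> is the \<open>(m+1)\<close>-th derivative of \<open>\<lambda>x. ln x - ln (1 - x)\<close>.\<close>
definition logit_deriv :: "nat \<Rightarrow> real \<Rightarrow> real" where
  "logit_deriv m x = fact m * ((-1) ^ m / x ^ Suc m + 1 / (1 - x) ^ Suc m)"

lemma has_real_derivative_logit_deriv:
  "0 < x \<Longrightarrow> x < 1 \<Longrightarrow> (logit_deriv m has_real_derivative logit_deriv (Suc m) x) (at x)"
  unfolding logit_deriv_def [abs_def]
  by (rule derivative_eq_intros refl | simp)+ (simp add: field_simps)

lemma smooth_on_logit:
  assumes "S \<subseteq> {0<..<1}"
  shows "smooth_on S (\<lambda>p. a + b * (ln p - ln (1 - p)))"
proof -
  define D where "D = case_nat (\<lambda>p. a + b * (ln p - ln (1 - p))) (\<lambda>m p. b * logit_deriv m p)"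
  have "(D n has_real_derivative D (Suc n) x) (at x)" if "x \<in> S" for n x
  proof -
    from that assms have x: "0 < x" "x < 1"
      by auto
    show ?thesis
    proof (cases n)
      case 0
      with x show ?thesis
        by (auto intro!: derivative_eq_intros simp: D_def logit_deriv_def field_simps)
    next
      case (Suc m)
      with x show ?thesis
        by (auto intro!: DERIV_cmult has_real_derivative_logit_deriv simp: D_def)
    qed
  qed
  moreover have "D 0 = (\<lambda>p. a + b * (ln p - ln (1 - p)))"
    by (simp add: D_def)
  ultimately show ?thesis
    unfolding smooth_on_def
    by (intro exI[of _ D]) (auto intro: has_field_derivative_at_within)
qed

lemma exp_ge_tangent: "exp x * (1 + (y - x)) \<le> exp (y :: real)"
proof -
  have "exp x * (1 + (y - x)) \<le> exp x * exp (y - x)"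
    by (intro mult_left_mono exp_ge_add_one_self) simp
  then show ?thesis
    by (simp add: exp_diff)
qed

lemma sgn_diff_strict_mono_on:
  fixes g :: "real \<Rightarrow> real"
  assumes "strict_mono_on S g" "x \<in> S" "y \<in> S"
  shows "sgn (g x - g y) = sgn (x - y)"
  using assms by (cases x y rule: linorder_cases) (auto simp: strict_mono_on_def)

locale cara_insurance =
  fixes \<alpha> R W :: real
  assumes \<alpha>_pos: "0 < \<alpha>" and \<alpha>_less_1: "\<alpha> < 1" and R_pos: "0 < R"
begin

text \<open>The fee only rescales the objective (see \<open>U_eq_disutility\<close>), so the optimal indemnity
  does not depend on it.\<close>

definition disutility :: "real \<Rightarrow> real \<Rightarrow> real" where
  "disutility p I = p * exp (-R * (1 - \<alpha>) * I) + (1 - p) * exp (-R * W) * exp (R * \<alpha> * I)"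

lemma U_eq_disutility: "U \<alpha> f R W p I = 1 - exp (R * f) * disutility p I"
proof -
  have "exp (-R * (W - (\<alpha> * I + f))) = exp (R * f) * (exp (-R * W) * exp (R * \<alpha> * I))"
    "exp (-R * (I - (\<alpha> * I + f))) = exp (R * f) * exp (-R * (1 - \<alpha>) * I)"
    by (simp_all flip: exp_add add: algebra_simps)
  then show ?thesis
    by (simp add: U_def util_def premium_def disutility_def algebra_simps)
qed

lemma U0_eq_disutility: "U0 R W p = 1 - disutility p 0"
  by (simp add: U0_def util_def disutility_def algebra_simps)

text \<open>Convexity in the indemnity: the coefficient of \<open>I - J\<close> is the derivative at \<open>J\<close>.\<close>

lemma disutility_tangent:
  assumes "0 \<le> p" "p \<le> 1"
  shows "disutility p J + R * (I - J) * exp (-R * (1 - \<alpha>) * J) *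
           (\<alpha> * (1 - p) * exp (-R * W) * exp (R * J) - (1 - \<alpha>) * p) \<le> disutility p I"
proof -
  have "p * (exp (-R * (1 - \<alpha>) * J) * (1 + (-R * (1 - \<alpha>) * I - -R * (1 - \<alpha>) * J)))
      \<le> p * exp (-R * (1 - \<alpha>) * I)"
    using assms by (intro mult_left_mono exp_ge_tangent) auto
  moreover have "(1 - p) * exp (-R * W) * (exp (R * \<alpha> * J) * (1 + (R * \<alpha> * I - R * \<alpha> * J)))
      \<le> (1 - p) * exp (-R * W) * exp (R * \<alpha> * I)"
    using assms by (intro mult_left_mono exp_ge_tangent) auto
  moreover have "exp (R * \<alpha> * J) = exp (-R * (1 - \<alpha>) * J) * exp (R * J)"
    by (simp flip: exp_add add: algebra_simps)
  ultimately show ?thesis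
    unfolding disutility_def by (simp add: algebra_simps)
qed

definition opt_indemnity :: "real \<Rightarrow> real" where
  "opt_indemnity p = W + (ln ((1 - \<alpha>) / \<alpha>) + ln p - ln (1 - p)) / R"

lemma opt_indemnity_stationary:
  assumes "0 < p" "p < 1"
  shows "\<alpha> * (1 - p) * exp (-R * W) * exp (R * opt_indemnity p) = (1 - \<alpha>) * p"
proof -
  have "exp (R * opt_indemnity p) = exp (R * W) * ((1 - \<alpha>) / \<alpha>) * p / (1 - p)"
    using assms \<alpha>_pos \<alpha>_less_1 R_pos
    by (simp add: opt_indemnity_def distrib_left exp_add exp_diff)
  then show ?thesis
    using assms \<alpha>_pos by (simp add: exp_minus field_simps)
qed

lemma opt_indemnity_strict_mono_on: "strict_mono_on {0<..<1} opt_indemnity"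
proof (rule strict_mono_onI)
  fix p q :: real
  assume "p \<in> {0<..<1}" "q \<in> {0<..<1}" "p < q"
  then have "ln p + ln (1 - q) < ln q + ln (1 - p)"
    by (intro add_strict_mono) auto
  with R_pos show "opt_indemnity p < opt_indemnity q"
    by (simp add: opt_indemnity_def divide_strict_right_mono)
qed

lemma opt_indemnity_surj: "\<exists>p\<in>{0<..<1}. opt_indemnity p = J"
proof -
  define s where "s = \<alpha> * exp (-R * W) * exp (R * J) / (1 - \<alpha>)"
  define p where "p = s / (1 + s)"
  have "0 < s"
    using \<alpha>_pos \<alpha>_less_1 by (simp add: s_def)
  then have p: "0 < p" "p < 1"
    by (simp_all add: p_def)
  have "\<alpha> * (1 - p) * exp (-R * W) * exp (R * J) = (1 - p) * ((1 - \<alpha>) * s)"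
    using \<alpha>_less_1 by (simp add: s_def)
  also have "\<dots> = (1 - \<alpha>) * p"
    using \<open>0 < s\<close> by (simp add: p_def field_simps)
  finally have "\<alpha> * (1 - p) * exp (-R * W) * exp (R * J) = (1 - \<alpha>) * p" .
  then have "\<alpha> * (1 - p) * exp (-R * W) * exp (R * opt_indemnity p)
      = \<alpha> * (1 - p) * exp (-R * W) * exp (R * J)"
    using opt_indemnity_stationary[OF p] by simp
  then have "opt_indemnity p = J"
    using p \<alpha>_pos R_pos by (simp only: mult_cancel_left) simp
  with p show ?thesis
    by auto
qed

lemma smooth_on_opt_indemnity:
  assumes "S \<subseteq> {0<..<1}"
  shows "smooth_on S opt_indemnity"
proof -
  have "opt_indemnity = (\<lambda>p. (W + ln ((1 - \<alpha>) / \<alpha>) / R) + 1 / R * (ln p - ln (1 - p)))"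
    by (simp add: fun_eq_iff opt_indemnity_def add_divide_distrib diff_divide_distrib)
  then show ?thesis
    using smooth_on_logit[OF assms] by metis
qed

lemma disutility_opt_indemnity_le:
  assumes "0 < p" "p < 1"
  shows "disutility p (opt_indemnity p) \<le> disutility p I"
  using disutility_tangent[of p "opt_indemnity p" I] opt_indemnity_stationary[OF assms] assms
  by simp

lemma disutility_mono_above_opt_indemnity:
  assumes "0 < p" "p < 1" "opt_indemnity p \<le> J" "J \<le> I"
  shows "disutility p J \<le> disutility p I"
proof -
  have "exp (R * opt_indemnity p) \<le> exp (R * J)"
    using assms R_pos by simp
  then have "(1 - \<alpha>) * p \<le> \<alpha> * (1 - p) * exp (-R * W) * exp (R * J)"
    unfolding opt_indemnity_stationary[OF assms(1,2), symmetric]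
    using assms \<alpha>_pos by (intro mult_left_mono) auto
  then have "0 \<le> R * (I - J) * exp (-R * (1 - \<alpha>) * J) *
      (\<alpha> * (1 - p) * exp (-R * W) * exp (R * J) - (1 - \<alpha>) * p)"
    using assms R_pos by simp
  with disutility_tangent[of p J I] assms show ?thesis
    by linarith
qed

lemma U_le_U_opt_indemnity:
  assumes "0 < p" "p < 1"
  shows "U \<alpha> f R W p I \<le> U \<alpha> f R W p (opt_indemnity p)"
  using disutility_opt_indemnity_le[OF assms] by (simp add: U_eq_disutility)

lemma U_le_U0_if_opt_indemnity_nonpos:
  assumes "0 \<le> f" "0 < p" "p < 1" "opt_indemnity p \<le> 0" "0 \<le> I"
  shows "U \<alpha> f R W p I \<le> U0 R W p"
proof -
  have "disutility p 0 \<le> disutility p I"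
    using assms by (intro disutility_mono_above_opt_indemnity) auto
  moreover have "0 \<le> disutility p 0" "1 \<le> exp (R * f)"
    using assms R_pos by (auto simp: disutility_def)
  ultimately have "1 * disutility p 0 \<le> exp (R * f) * disutility p I"
    by (intro mult_mono) auto
  then show ?thesis
    by (simp add: U_eq_disutility U0_eq_disutility)
qed

text \<open>Insuring at a stationary indemnity \<open>J\<close> beats not insuring iff \<open>e\<^sup>R\<^sup>f < break_even J\<close>.\<close>

definition break_even :: "real \<Rightarrow> real" where
  "break_even J = \<alpha> * exp (R * (1 - \<alpha>) * J) + (1 - \<alpha>) * exp (-R * \<alpha> * J)"

lemma disutility_at_stationary:
  assumes "\<alpha> * (1 - p) * exp (-R * W) * exp (R * J) = (1 - \<alpha>) * p"
  shows "disutility p J = (1 - p) * exp (-R * W) * exp (R * \<alpha> * J) / (1 - \<alpha>)"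
    and "disutility p 0 = (1 - p) * exp (-R * W) * exp (R * \<alpha> * J) / (1 - \<alpha>) * break_even J"
proof -
  define a b where "a = exp (R * \<alpha> * J)" and "b = exp (R * (1 - \<alpha>) * J)"
  have exps: "exp (R * J) = a * b" "exp (-R * (1 - \<alpha>) * J) = 1 / b" "exp (-R * \<alpha> * J) = 1 / a"
    by (simp_all add: a_def b_def exp_minus inverse_eq_divide flip: exp_add) (simp add: algebra_simps)
  have "a > 0" "b > 0"
    by (simp_all add: a_def b_def)
  have p: "p = \<alpha> * (1 - p) * exp (-R * W) * a * b / (1 - \<alpha>)"
    using assms[unfolded exps(1)] \<alpha>_less_1 by (simp add: field_simps)
  show "disutility p J = (1 - p) * exp (-R * W) * exp (R * \<alpha> * J) / (1 - \<alpha>)"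
    using \<alpha>_less_1 \<open>b > 0\<close> unfolding disutility_def exps a_def[symmetric]
    by (subst (1) p) (simp add: field_simps)
  show "disutility p 0 = (1 - p) * exp (-R * W) * exp (R * \<alpha> * J) / (1 - \<alpha>) * break_even J"
    using \<alpha>_less_1 \<open>a > 0\<close> unfolding disutility_def break_even_def exps a_def[symmetric] b_def[symmetric]
    by (subst (1) p) (simp add: field_simps)
qed

lemma U_opt_indemnity_minus_U0:
  assumes "0 < p" "p < 1"
  shows "U \<alpha> f R W p (opt_indemnity p) - U0 R W p
    = (1 - p) * exp (-R * W) * exp (R * \<alpha> * opt_indemnity p) / (1 - \<alpha>)
      * (break_even (opt_indemnity p) - exp (R * f))"
  unfolding U_eq_disutility U0_eq_disutility
    disutility_at_stationary[OF opt_indemnity_stationary[OF assms]]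
  by (simp add: right_diff_distrib)

lemma sgn_U_opt_indemnity_minus_U0:
  assumes "0 < p" "p < 1"
  shows "sgn (U \<alpha> f R W p (opt_indemnity p) - U0 R W p) = sgn (break_even (opt_indemnity p) - exp (R * f))"
  using assms \<alpha>_less_1 by (simp add: U_opt_indemnity_minus_U0 sgn_mult)

lemma break_even_0: "break_even 0 = 1"
  by (simp add: break_even_def)

lemma break_even_strict_mono_on: "strict_mono_on {0..} break_even"
proof (rule strict_mono_onI)
  fix a b :: real
  assume "a \<in> {0..}" "b \<in> {0..}" "a < b"
  then show "break_even a < break_even b"
  proof (intro DERIV_pos_imp_increasing_open[OF \<open>a < b\<close>])
    fix x
    assume "a < x" "x < b"
    with \<open>a \<in> {0..}\<close> R_pos have "exp (-R * \<alpha> * x) < exp (R * (1 - \<alpha>) * x)"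
      by (simp add: algebra_simps)
    then have "0 < R * \<alpha> * (1 - \<alpha>) * (exp (R * (1 - \<alpha>) * x) - exp (-R * \<alpha> * x))"
      using R_pos \<alpha>_pos \<alpha>_less_1 by simp
    moreover have "(break_even has_real_derivative
        R * \<alpha> * (1 - \<alpha>) * (exp (R * (1 - \<alpha>) * x) - exp (-R * \<alpha> * x))) (at x)"
      unfolding break_even_def by (auto intro!: derivative_eq_intros simp: algebra_simps)
    ultimately show "\<exists>y. (break_even has_real_derivative y) (at x) \<and> 0 < y"
      by blast
  next
    show "continuous_on {a..b} break_even"
      unfolding break_even_def by (intro continuous_intros)
  qed
qed

lemma break_even_crossing:
  assumes "1 < y"
  shows "\<exists>J>0. break_even J = y"
proof -
  define J where "J = y / (\<alpha> * R * (1 - \<alpha>))"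
  have "0 < J"
    using assms \<alpha>_pos \<alpha>_less_1 R_pos by (simp add: J_def)
  have "y < \<alpha> * (1 + R * (1 - \<alpha>) * J)"
    using \<alpha>_pos \<alpha>_less_1 R_pos by (simp add: J_def field_simps)
  also have "\<dots> \<le> \<alpha> * exp (R * (1 - \<alpha>) * J)"
    using \<alpha>_pos by (simp add: exp_ge_add_one_self)
  also have "\<dots> \<le> break_even J"
    using \<alpha>_less_1 by (simp add: break_even_def)
  finally have "y \<le> break_even J"
    by simp
  moreover have "continuous_on {0..J} break_even"
    unfolding break_even_def by (intro continuous_intros)
  ultimately obtain J' where "0 \<le> J'" "J' \<le> J" "break_even J' = y"
    using IVT'[of break_even 0 y J] assms \<open>0 < J\<close> by (auto simp: break_even_0)
  with assms show ?thesis
    by (metis break_even_0 less_eq_real_def less_irrefl)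
qed

lemma insurance_threshold:
  assumes "0 < f"
  obtains pstar where "pstar \<in> {0<..<1}"
    and "\<And>p. pstar \<le> p \<Longrightarrow> p < 1 \<Longrightarrow> 0 < opt_indemnity p"
    and "\<And>p. p \<in> {0<..<1} \<Longrightarrow> 0 \<le> opt_indemnity p \<Longrightarrow>
      sgn (U \<alpha> f R W p (opt_indemnity p) - U0 R W p) = sgn (p - pstar)"
proof -
  have "1 < exp (R * f)"
    using assms R_pos by simp
  then obtain J where J: "0 < J" "break_even J = exp (R * f)"
    using break_even_crossing by blast
  obtain pstar where pstar: "pstar \<in> {0<..<1}" "opt_indemnity pstar = J"
    using opt_indemnity_surj by blast
  have sgn_opt_indemnity: "sgn (opt_indemnity p - J) = sgn (p - pstar)" if "p \<in> {0<..<1}" for p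
    using sgn_diff_strict_mono_on[OF opt_indemnity_strict_mono_on that pstar(1)] pstar(2) by simp
  show ?thesis
  proof (rule that[OF pstar(1)])
    show "0 < opt_indemnity p" if "pstar \<le> p" "p < 1" for p
      using sgn_opt_indemnity[of p] pstar J that by (auto simp: sgn_if split: if_splits)
    show "sgn (U \<alpha> f R W p (opt_indemnity p) - U0 R W p) = sgn (p - pstar)"
      if "p \<in> {0<..<1}" "0 \<le> opt_indemnity p" for p
      using sgn_U_opt_indemnity_minus_U0[of p f] sgn_opt_indemnity[OF that(1)] J that
        sgn_diff_strict_mono_on[OF break_even_strict_mono_on, of "opt_indemnity p" J] by simp
  qed
qed

end

theorem proposition4p1:
  fixes \<alpha> f W R :: real
  assumes "0 < \<alpha>" and "\<alpha> < 1" and "0 < f" and "0 < W" and "0 < R"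
  shows "\<exists>pstar Ihat. 0 < pstar \<and> pstar < 1 \<and>
     smooth_on {pstar..<1} Ihat \<and>
     (\<forall>p\<in>{pstar..<1}. 0 < Ihat p) \<and>
     (\<forall>p\<in>{0<..<pstar}. \<forall>I\<ge>0. U \<alpha> f R W p I \<le> U0 R W p) \<and>
     ((\<forall>I\<ge>0. U \<alpha> f R W pstar I \<le> U \<alpha> f R W pstar (Ihat pstar)) \<and>
      U0 R W pstar = U \<alpha> f R W pstar (Ihat pstar) \<and> 0 < Ihat pstar) \<and>
     (\<forall>p\<in>{pstar<..<1}.
        (\<forall>I\<ge>0. U \<alpha> f R W p I \<le> U \<alpha> f R W p (Ihat p)) \<and>
        U \<alpha> f R W p (Ihat p) > U0 R W p \<and> 0 < Ihat p)"
proof -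
  interpret cara_insurance \<alpha> R W
    using assms by unfold_locales
  obtain pstar where pstar: "pstar \<in> {0<..<1}"
    and opt_indemnity_pos: "\<And>p. pstar \<le> p \<Longrightarrow> p < 1 \<Longrightarrow> 0 < opt_indemnity p"
    and sgn_gain: "\<And>p. p \<in> {0<..<1} \<Longrightarrow> 0 \<le> opt_indemnity p \<Longrightarrow>
      sgn (U \<alpha> f R W p (opt_indemnity p) - U0 R W p) = sgn (p - pstar)"
    using insurance_threshold \<open>0 < f\<close> by blast
  show ?thesis
  proof (intro exI[of _ pstar] exI[of _ opt_indemnity] conjI ballI allI impI)
    show "smooth_on {pstar..<1} opt_indemnity"
      using pstar by (intro smooth_on_opt_indemnity) auto
  next
    fix p I :: real
    assume p: "p \<in> {0<..<pstar}" and "0 \<le> I"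
    show "U \<alpha> f R W p I \<le> U0 R W p"
    proof (cases "opt_indemnity p \<le> 0")
      case True
      with p pstar \<open>0 \<le> I\<close> \<open>0 < f\<close> show ?thesis
        by (intro U_le_U0_if_opt_indemnity_nonpos) auto
    next
      case False
      with p pstar sgn_gain[of p] U_le_U_opt_indemnity[of p f I] show ?thesis
        by (auto simp: sgn_if split: if_splits)
    qed
  next
    show "U0 R W pstar = U \<alpha> f R W pstar (opt_indemnity pstar)"
      using sgn_gain[of pstar] opt_indemnity_pos[of pstar] pstar by (simp add: sgn_0_0)
  next
    fix p
    assume "p \<in> {pstar<..<1}"
    then show "U0 R W p < U \<alpha> f R W p (opt_indemnity p)"
      using sgn_gain[of p] opt_indemnity_pos[of p] pstar by (auto simp: sgn_if split: if_splits)
  qed (use pstar opt_indemnity_pos U_le_U_opt_indemnity in auto)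
qed

end
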